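(* For any $k \in \mathbb{N}$ and $n_1,\ldots,n_k \in \mathbb{N}$, $R_\mathrm{cyc}(S_{n_1},\ldots,S_{n_k}) = R(S_{n_1},\ldots,S_{n_k})$, where each $S_{n_j}$ is any star graph of order $n_j$.
   Context: All graphs are finite, simple and undirected, and a graph of order $n$ has vertex set $\{0,1,\ldots,n-1\}$; $K_n$ is the complete graph on $\{0,\ldots,n-1\}$. A $k$-edge-coloring of $K_n$ assigns each edge a color in $\{1,\ldots,k\}$. For a graph $H$ and such a coloring, an embedding of $H$ in color $j$ is an injective map $\varphi\colon V(H)\to V(K_n)$ such that for every edge $uv$ of $H$ the edge $\{\varphi(u),\varphi(v)\}$ has color $j$; it is increasing up to a cyclic permutation if there exists $t\in V(H)$ such that $(\varphi(t),\ldots,\varphi(|H|-1),\varphi(0),\ldots,\varphi(t-1))$ is increasing. $R(H_1,\ldots,H_k)$ is the smallest $n$ such that every $k$-edge-coloring of $K_n$ admits, for some $j$, an embedding of $H_j$ in color $j$; $R_\mathrm{cyc}$ is defined in the same way but requiring the embedding to be increasing up to a cyclic permutation. A star graph of order $n$ is a graph on $\{0,\ldots,n-1\}$ in which one vertex (the center, arbitrary) is adjacent to all others and there are no other edges. *)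

theory Defs
  imports Main
begin

text \<open>A finite simple graph of order n on vertex set {0..<n}: a pair (n, E) where
  E is a set of 2-element subsets of {0..<n}.\<close>
type_synonym graph = "nat \<times> nat set set"

definition order :: "graph \<Rightarrow> nat" where "order H = fst H"
definition edges :: "graph \<Rightarrow> nat set set" where "edges H = snd H"

definition simple_graph :: "graph \<Rightarrow> bool" where
  "simple_graph H \<longleftrightarrow> (\<forall>e\<in>edges H. e \<subseteq> {0..<order H} \<and> card e = 2)"

definition is_star :: "graph \<Rightarrow> bool" where
  "is_star H \<longleftrightarrow> (\<exists>c<order H. edges H = {{c, v} | v. v < order H \<and> v \<noteq> c})"

definition is_coloring :: "nat \<Rightarrow> nat \<Rightarrow> (nat set \<Rightarrow> nat) \<Rightarrow> bool" where
  "is_coloring k N col \<longleftrightarrow>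
     (\<forall>u v. u < N \<longrightarrow> v < N \<longrightarrow> u \<noteq> v \<longrightarrow> col {u, v} \<in> {1..k})"

definition embedding :: "nat \<Rightarrow> (nat set \<Rightarrow> nat) \<Rightarrow> graph \<Rightarrow> nat \<Rightarrow> (nat \<Rightarrow> nat) \<Rightarrow> bool" where
  "embedding N col H j \<phi> \<longleftrightarrow>
     inj_on \<phi> {0..<order H} \<and> \<phi> ` {0..<order H} \<subseteq> {0..<N} \<and>
     (\<forall>u v. {u, v} \<in> edges H \<longrightarrow> col {\<phi> u, \<phi> v} = j)"

definition cyc_increasing :: "nat \<Rightarrow> (nat \<Rightarrow> nat) \<Rightarrow> bool" where
  "cyc_increasing n \<phi> \<longleftrightarrow>
     (\<exists>t<n. \<forall>i j. i < j \<longrightarrow> j < n \<longrightarrow> \<phi> ((t + i) mod n) < \<phi> ((t + j) mod n))"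

definition ramsey_prop :: "nat \<Rightarrow> (nat \<Rightarrow> graph) \<Rightarrow> nat \<Rightarrow> bool" where
  "ramsey_prop k Hs N \<longleftrightarrow>
     (\<forall>col. is_coloring k N col \<longrightarrow> (\<exists>j\<in>{1..k}. \<exists>\<phi>. embedding N col (Hs j) j \<phi>))"

definition ramsey_cyc_prop :: "nat \<Rightarrow> (nat \<Rightarrow> graph) \<Rightarrow> nat \<Rightarrow> bool" where
  "ramsey_cyc_prop k Hs N \<longleftrightarrow>
     (\<forall>col. is_coloring k N col \<longrightarrow>
        (\<exists>j\<in>{1..k}. \<exists>\<phi>. embedding N col (Hs j) j \<phi> \<and> cyc_increasing (order (Hs j)) \<phi>))"

definition ramsey_num :: "nat \<Rightarrow> (nat \<Rightarrow> graph) \<Rightarrow> nat" where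
  "ramsey_num k Hs = (LEAST N. ramsey_prop k Hs N)"

definition ramsey_cyc_num :: "nat \<Rightarrow> (nat \<Rightarrow> graph) \<Rightarrow> nat" where
  "ramsey_cyc_num k Hs = (LEAST N. ramsey_cyc_prop k Hs N)"

end

theory Submission
  imports Defs "HOL-Number_Theory.Cong"
begin

text \<open>For a star only the image of the centre matters: any injective relabelling of the
  leaves inside the image set of an embedding is again an embedding. So list the image set
  in increasing order and rotate the list until the centre lands on its original image; the
  resulting embedding is increasing up to a cyclic permutation. Hence the ordinary and the
  cyclic Ramsey properties hold for exactly the same N.\<close>

lemma inj_on_add_mod: "inj_on (\<lambda>i. (i + s) mod n) {0..<(n::nat)}"
proof (rule inj_onI)
  fix x y assume "x \<in> {0..<n}" "y \<in> {0..<n}" "(x + s) mod n = (y + s) mod n"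
  then show "x = y"
    using cong_add_rcancel_nat[of x s y n] by (simp add: cong_def)
qed

lemma cyc_increasing_rotate_sorted:
  assumes sorted: "sorted_wrt (<) xs" and len: "length xs = n" and "0 < n"
  shows "cyc_increasing n (\<lambda>i. xs ! ((i + s) mod n))"
proof -
  define t where "t = (n - s mod n) mod n"
  have "(t + s) mod n = 0"
  proof -
    have "(t + s) mod n = (n - s mod n + s mod n) mod n"
      unfolding t_def by presburger
    also have "\<dots> = 0" using \<open>0 < n\<close> by simp
    finally show ?thesis .
  qed
  have rotate_back: "((t + i) mod n + s) mod n = i" if "i < n" for i
  proof -
    have "((t + i) mod n + s) mod n = (i + (t + s)) mod n"
      by (simp only: mod_add_left_eq) (simp add: ac_simps)
    also have "\<dots> = (i + (t + s) mod n) mod n"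
      by (simp add: mod_add_right_eq)
    also have "\<dots> = i"
      using \<open>(t + s) mod n = 0\<close> that by simp
    finally show ?thesis .
  qed
  show ?thesis
    unfolding cyc_increasing_def
  proof (intro exI[of _ t] conjI allI impI)
    show "t < n" unfolding t_def using \<open>0 < n\<close> by simp
    fix i j assume "i < j" "j < n"
    then show "xs ! (((t + i) mod n + s) mod n) < xs ! (((t + j) mod n + s) mod n)"
      using rotate_back sorted len by (simp add: sorted_wrt_iff_nth_less)
  qed
qed

lemma embedding_star_relabel:
  assumes c: "c < order H" and edges: "edges H = {{c, v} | v. v < order H \<and> v \<noteq> c}"
    and \<phi>: "embedding N col H j \<phi>"
    and inj: "inj_on \<psi> {0..<order H}" and image: "\<psi> ` {0..<order H} \<subseteq> \<phi> ` {0..<order H}"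
    and centre: "\<psi> c = \<phi> c"
  shows "embedding N col H j \<psi>"
  unfolding embedding_def
proof (intro conjI allI impI)
  show "inj_on \<psi> {0..<order H}" by (fact inj)
  show "\<psi> ` {0..<order H} \<subseteq> {0..<N}"
    using image \<phi> unfolding embedding_def by blast
  fix u v assume "{u, v} \<in> edges H"
  then obtain w where w: "w < order H" "w \<noteq> c" and uv: "{u, v} = {c, w}"
    using edges by auto
  obtain w' where w': "w' < order H" "\<psi> w = \<phi> w'"
    using image w(1) by force
  have "\<psi> w \<noteq> \<psi> c"
    using inj w c by (meson atLeastLessThan_iff inj_onD zero_le)
  then have "{c, w'} \<in> edges H"
    using edges w' centre by auto
  then have "col {\<phi> c, \<phi> w'} = j"
    using \<phi> unfolding embedding_def by blast
  moreover have "{\<psi> u, \<psi> v} = {\<psi> c, \<psi> w}"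
    using uv by (auto simp: doubleton_eq_iff)
  ultimately show "col {\<psi> u, \<psi> v} = j"
    using centre w' by simp
qed

lemma embedding_star_cyc_increasing:
  assumes star: "is_star H" and \<phi>: "embedding N col H j \<phi>"
  shows "\<exists>\<psi>. embedding N col H j \<psi> \<and> cyc_increasing (order H) \<psi>"
proof -
  define n where "n = order H"
  obtain c where c: "c < n" and edges: "edges H = {{c, v} | v. v < n \<and> v \<noteq> c}"
    using star unfolding is_star_def n_def by blast
  define xs where "xs = sorted_list_of_set (\<phi> ` {0..<n})"
  have inj_\<phi>: "inj_on \<phi> {0..<n}"
    using \<phi> unfolding embedding_def n_def by blast
  have len: "length xs = n"
    unfolding xs_def using card_image[OF inj_\<phi>] by simp
  have set_xs: "set xs = \<phi> ` {0..<n}"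
    unfolding xs_def by simp
  obtain m where m: "m < n" "xs ! m = \<phi> c"
    using c set_xs len by (metis atLeastLessThan_iff imageI in_set_conv_nth zero_le)
  define s where "s = m + (n - c)" \<comment> \<open>so that the rotation moves the centre to position m\<close>
  define \<psi> where "\<psi> = nth xs \<circ> (\<lambda>i. (i + s) mod n)"
  have "0 < n" using c by simp
  have rotate_into: "(\<lambda>i. (i + s) mod n) ` {0..<n} \<subseteq> {0..<n}"
    using \<open>0 < n\<close> by auto
  have "inj_on (nth xs) {0..<n}"
    using len by (simp add: xs_def inj_on_nth)
  then have "inj_on \<psi> {0..<n}"
    unfolding \<psi>_def by (rule comp_inj_on[OF inj_on_add_mod inj_on_subset[OF _ rotate_into]])
  moreover have "\<psi> ` {0..<n} \<subseteq> \<phi> ` {0..<n}"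
    unfolding set_xs[symmetric] using \<open>0 < n\<close> len by (auto simp: \<psi>_def intro!: nth_mem)
  moreover have "\<psi> c = \<phi> c"
    using c m by (simp add: \<psi>_def s_def)
  ultimately have "embedding N col H j \<psi>"
    unfolding n_def by (rule embedding_star_relabel[OF c[unfolded n_def] edges[unfolded n_def] \<phi>])
  moreover have "cyc_increasing n \<psi>"
    using cyc_increasing_rotate_sorted[of xs n s] len \<open>0 < n\<close>
    by (simp add: \<psi>_def xs_def comp_def)
  ultimately show ?thesis
    unfolding n_def by blast
qed

lemma ramsey_cyc_prop_stars_eq:
  assumes "\<forall>j\<in>{1..k}. is_star (Hs j)"
  shows "ramsey_cyc_prop k Hs = ramsey_prop k Hs"
  using assms embedding_star_cyc_increasing
  unfolding ramsey_cyc_prop_def ramsey_prop_def by meson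

theorem proposition2p2:
  fixes k :: nat and ns :: "nat \<Rightarrow> nat" and Hs :: "nat \<Rightarrow> graph"
  assumes "\<forall>j\<in>{1..k}. is_star (Hs j) \<and> order (Hs j) = ns j"
  shows "ramsey_cyc_num k Hs = ramsey_num k Hs"
  using ramsey_cyc_prop_stars_eq[of k Hs] assms
  unfolding ramsey_cyc_num_def ramsey_num_def by simp

end
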